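(* Let $\mathcal C$ be a $(2,1)$-category and let $\mathcal A,\mathcal B$ be arrowy $2$-subcategories of $\mathcal C$ such that for every morphism $f\colon X\to Y$ of $\mathcal C$ there exist a morphism $i\colon X\to Z$ of $\mathcal A$, a morphism $p\colon Z\to Y$ of $\mathcal B$ and a $2$-cell $pi\Rightarrow f$ (i.e. $\mathrm{Comp}_{\mathcal A,\mathcal B}(f)\neq\emptyset$). Then for every $n\ge 0$ and every $n$-simplex $\sigma$ of $\mathcal C$, the set $\mathrm{Comp}_{\mathcal A,\mathcal B}(\sigma)$ is nonempty.
   Context: A $(2,1)$-category is a $2$-category all of whose $2$-cells are invertible; an arrowy $2$-subcategory has all objects and is full on $2$-cells between its morphisms (inclusion on hom-categories fully faithful and injective on objects). $[n]=\{0,\dots,n\}$ with its usual order, viewed as a category. An $n$-simplex of $\mathcal C$ is a strictly unital pseudofunctor $\sigma\colon[n]\to\mathcal C$. Let $\Delta_n=\{(k,l)\in[n]\times[n]\mid k\ge l\}$ with the product partial order, viewed as a category, and let $[n]\to\Delta_n$ be the diagonal embedding $l\mapsto(l,l)$. The set $\mathrm{Comp}_{\mathcal A,\mathcal B}(\sigma)$ of compactifications of $\sigma$ is the set of strictly unital pseudofunctors $F\colon\Delta_n\to\mathcal C$ whose composite with the diagonal embedding equals $\sigma$, such that $F((k,l)\to(k',l))$ is a morphism of $\mathcal A$ and $F((k',l)\to(k',l'))$ is a morphism of $\mathcal B$ for all relevant $k\le k'$, $l\le l'$. For $n=1$ and $\sigma=f$ this amounts to a factorization $X\xrightarrow{i}Z\xrightarrow{p}Y$,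 $i\in\mathcal A$, $p\in\mathcal B$, with an invertible $2$-cell $pi\Rightarrow f$. *)

theory Defs
  imports Main
begin

text \<open>Composition is written in applicative order:
  cmp g f is g after f; vcmp b a is b after a (vertical); hcmp b a is b after a
  (horizontal).\<close>

record ('o, 'm, 'c) twocat =
  obj  :: "'o set"
  arr  :: "'m set"
  cel  :: "'c set"
  src  :: "'m \<Rightarrow> 'o"
  trg  :: "'m \<Rightarrow> 'o"
  ide  :: "'o \<Rightarrow> 'm"
  cmp  :: "'m \<Rightarrow> 'm \<Rightarrow> 'm"
  src2 :: "'c \<Rightarrow> 'm"
  trg2 :: "'c \<Rightarrow> 'm"
  ide2 :: "'m \<Rightarrow> 'c"
  vcmp :: "'c \<Rightarrow> 'c \<Rightarrow> 'c"
  hcmp :: "'c \<Rightarrow> 'c \<Rightarrow> 'c"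

definition two_category :: "('o, 'm, 'c, 'x) twocat_scheme \<Rightarrow> bool" where
  "two_category C \<longleftrightarrow>
     \<comment> \<open>underlying 1-category\<close>
     (\<forall>f\<in>arr C. src C f \<in> obj C \<and> trg C f \<in> obj C) \<and>
     (\<forall>X\<in>obj C. ide C X \<in> arr C \<and> src C (ide C X) = X \<and> trg C (ide C X) = X) \<and>
     (\<forall>f\<in>arr C. \<forall>g\<in>arr C. src C g = trg C f \<longrightarrow>
        cmp C g f \<in> arr C \<and> src C (cmp C g f) = src C f \<and> trg C (cmp C g f) = trg C g) \<and>
     (\<forall>f\<in>arr C. cmp C f (ide C (src C f)) = f \<and> cmp C (ide C (trg C f)) f = f) \<and>
     (\<forall>f\<in>arr C. \<forall>g\<in>arr C. \<forall>h\<in>arr C. src C g = trg C f \<and> src C h = trg C g \<longrightarrow>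
        cmp C h (cmp C g f) = cmp C (cmp C h g) f) \<and>
     \<comment> \<open>2-cells between parallel 1-cells, vertical composition\<close>
     (\<forall>a\<in>cel C. src2 C a \<in> arr C \<and> trg2 C a \<in> arr C \<and>
        src C (src2 C a) = src C (trg2 C a) \<and> trg C (src2 C a) = trg C (trg2 C a)) \<and>
     (\<forall>f\<in>arr C. ide2 C f \<in> cel C \<and> src2 C (ide2 C f) = f \<and> trg2 C (ide2 C f) = f) \<and>
     (\<forall>a\<in>cel C. \<forall>b\<in>cel C. src2 C b = trg2 C a \<longrightarrow>
        vcmp C b a \<in> cel C \<and> src2 C (vcmp C b a) = src2 C a \<and> trg2 C (vcmp C b a) = trg2 C b) \<and>
     (\<forall>a\<in>cel C. vcmp C a (ide2 C (src2 C a)) = a \<and> vcmp C (ide2 C (trg2 C a)) a = a) \<and>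
     (\<forall>a\<in>cel C. \<forall>b\<in>cel C. \<forall>c\<in>cel C. src2 C b = trg2 C a \<and> src2 C c = trg2 C b \<longrightarrow>
        vcmp C c (vcmp C b a) = vcmp C (vcmp C c b) a) \<and>
     \<comment> \<open>horizontal composition\<close>
     (\<forall>a\<in>cel C. \<forall>b\<in>cel C. src C (src2 C b) = trg C (src2 C a) \<longrightarrow>
        hcmp C b a \<in> cel C \<and> src2 C (hcmp C b a) = cmp C (src2 C b) (src2 C a) \<and>
        trg2 C (hcmp C b a) = cmp C (trg2 C b) (trg2 C a)) \<and>
     (\<forall>f\<in>arr C. \<forall>g\<in>arr C. src C g = trg C f \<longrightarrow>
        hcmp C (ide2 C g) (ide2 C f) = ide2 C (cmp C g f)) \<and>
     (\<forall>a\<in>cel C. hcmp C a (ide2 C (ide C (src C (src2 C a)))) = a \<and>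
        hcmp C (ide2 C (ide C (trg C (src2 C a)))) a = a) \<and>
     (\<forall>a\<in>cel C. \<forall>b\<in>cel C. \<forall>c\<in>cel C.
        src C (src2 C b) = trg C (src2 C a) \<and> src C (src2 C c) = trg C (src2 C b) \<longrightarrow>
        hcmp C c (hcmp C b a) = hcmp C (hcmp C c b) a) \<and>
     \<comment> \<open>interchange law\<close>
     (\<forall>a\<in>cel C. \<forall>a'\<in>cel C. \<forall>b\<in>cel C. \<forall>b'\<in>cel C.
        src2 C a' = trg2 C a \<and> src2 C b' = trg2 C b \<and> src C (src2 C b) = trg C (src2 C a) \<longrightarrow>
        hcmp C (vcmp C b' b) (vcmp C a' a) = vcmp C (hcmp C b' a') (hcmp C b a))"

definition iso2 :: "('o, 'm, 'c, 'x) twocat_scheme \<Rightarrow> 'c \<Rightarrow> bool" where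
  "iso2 C a \<longleftrightarrow> a \<in> cel C \<and>
     (\<exists>b\<in>cel C. src2 C b = trg2 C a \<and> trg2 C b = src2 C a \<and>
        vcmp C b a = ide2 C (src2 C a) \<and> vcmp C a b = ide2 C (trg2 C a))"

definition two_one_category :: "('o, 'm, 'c, 'x) twocat_scheme \<Rightarrow> bool" where
  "two_one_category C \<longleftrightarrow> two_category C \<and> (\<forall>a\<in>cel C. iso2 C a)"

text \<open>An arrowy 2-subcategory (all objects, full on 2-cells) is determined by its set
  of 1-cells, which must contain all identities and be closed under composition.\<close>
definition arrowy_sub :: "('o, 'm, 'c, 'x) twocat_scheme \<Rightarrow> 'm set \<Rightarrow> bool" where
  "arrowy_sub C A \<longleftrightarrow> A \<subseteq> arr C \<and> (\<forall>X\<in>obj C. ide C X \<in> A) \<and>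
     (\<forall>f\<in>A. \<forall>g\<in>A. src C g = trg C f \<longrightarrow> cmp C g f \<in> A)"

text \<open>Data: object map F0, 1-cell map F1 (F1 a b is the image of a \<le> b), and the
  compositor F2 a b c : F1 b c \<circ> F1 a b \<Rightarrow> F1 a c, an invertible 2-cell.\<close>
definition su_pseudofunctor ::
  "('o, 'm, 'c, 'x) twocat_scheme \<Rightarrow> 'i set \<Rightarrow> ('i \<Rightarrow> 'i \<Rightarrow> bool) \<Rightarrow>
   ('i \<Rightarrow> 'o) \<Rightarrow> ('i \<Rightarrow> 'i \<Rightarrow> 'm) \<Rightarrow> ('i \<Rightarrow> 'i \<Rightarrow> 'i \<Rightarrow> 'c) \<Rightarrow> bool" where
  "su_pseudofunctor C I le F0 F1 F2 \<longleftrightarrow>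
     (\<forall>a\<in>I. F0 a \<in> obj C) \<and>
     (\<forall>a\<in>I. \<forall>b\<in>I. le a b \<longrightarrow>
        F1 a b \<in> arr C \<and> src C (F1 a b) = F0 a \<and> trg C (F1 a b) = F0 b) \<and>
     (\<forall>a\<in>I. F1 a a = ide C (F0 a)) \<and>
     (\<forall>a\<in>I. \<forall>b\<in>I. \<forall>c\<in>I. le a b \<and> le b c \<longrightarrow>
        iso2 C (F2 a b c) \<and> src2 C (F2 a b c) = cmp C (F1 b c) (F1 a b) \<and>
        trg2 C (F2 a b c) = F1 a c) \<and>
     (\<forall>a\<in>I. \<forall>b\<in>I. le a b \<longrightarrow>
        F2 a a b = ide2 C (F1 a b) \<and> F2 a b b = ide2 C (F1 a b)) \<and>
     (\<forall>a\<in>I. \<forall>b\<in>I. \<forall>c\<in>I. \<forall>d\<in>I. le a b \<and> le b c \<and> le c d \<longrightarrow>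
        vcmp C (F2 a c d) (hcmp C (ide2 C (F1 c d)) (F2 a b c)) =
        vcmp C (F2 a b d) (hcmp C (F2 b c d) (ide2 C (F1 a b))))"

definition simplex ::
  "('o, 'm, 'c, 'x) twocat_scheme \<Rightarrow> nat \<Rightarrow>
   (nat \<Rightarrow> 'o) \<Rightarrow> (nat \<Rightarrow> nat \<Rightarrow> 'm) \<Rightarrow> (nat \<Rightarrow> nat \<Rightarrow> nat \<Rightarrow> 'c) \<Rightarrow> bool" where
  "simplex C n s0 s1 s2 \<longleftrightarrow> su_pseudofunctor C {0..n} (\<le>) s0 s1 s2"

definition Delta :: "nat \<Rightarrow> (nat \<times> nat) set" where
  "Delta n = {(k, l). k \<le> n \<and> l \<le> k}"

definition Delta_le :: "nat \<times> nat \<Rightarrow> nat \<times> nat \<Rightarrow> bool" where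
  "Delta_le = (\<lambda>(k, l) (k', l'). k \<le> k' \<and> l \<le> l')"

text \<open>Compactifications of the n-simplex (s0, s1, s2): strictly unital pseudofunctors
  on Delta n restricting to the simplex along the diagonal, with horizontal arrows in A
  and vertical arrows in B.\<close>
definition Comp ::
  "('o, 'm, 'c, 'x) twocat_scheme \<Rightarrow> 'm set \<Rightarrow> 'm set \<Rightarrow> nat \<Rightarrow>
   (nat \<Rightarrow> 'o) \<Rightarrow> (nat \<Rightarrow> nat \<Rightarrow> 'm) \<Rightarrow> (nat \<Rightarrow> nat \<Rightarrow> nat \<Rightarrow> 'c) \<Rightarrow>
   ((nat \<times> nat \<Rightarrow> 'o) \<times> (nat \<times> nat \<Rightarrow> nat \<times> nat \<Rightarrow> 'm) \<times>
    (nat \<times> nat \<Rightarrow> nat \<times> nat \<Rightarrow> nat \<times> nat \<Rightarrow> 'c)) set" where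
  "Comp C A B n s0 s1 s2 = {(F0, F1, F2).
     su_pseudofunctor C (Delta n) Delta_le F0 F1 F2 \<and>
     (\<forall>l\<le>n. F0 (l, l) = s0 l) \<and>
     (\<forall>l l'. l \<le> l' \<and> l' \<le> n \<longrightarrow> F1 (l, l) (l', l') = s1 l l') \<and>
     (\<forall>l l' l''. l \<le> l' \<and> l' \<le> l'' \<and> l'' \<le> n \<longrightarrow>
        F2 (l, l) (l', l') (l'', l'') = s2 l l' l'') \<and>
     (\<forall>k k' l. l \<le> k \<and> k \<le> k' \<and> k' \<le> n \<longrightarrow> F1 (k, l) (k', l) \<in> A) \<and>
     (\<forall>k' l l'. l \<le> l' \<and> l' \<le> k' \<and> k' \<le> n \<longrightarrow> F1 (k', l) (k', l') \<in> B)}"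

end

theory Submission
  imports Defs
begin

text \<open>
  The compactification is built one point of \<open>\<Delta>\<^sub>n\<close> at a time.  The general engine is
  a one-point extension theorem for strictly unital pseudofunctors on posets: if a point
  \<open>x\<close> is added to a subposet \<open>P\<close> such that, inside \<open>P\<close>, the elements below \<open>x\<close> are exactly
  those below some \<open>m\<close>, and the elements above \<open>x\<close> exactly those above some \<open>M \<ge> m\<close>, then
  any factorisation \<open>\<beta> : v \<circ> u \<Rightarrow> F(m \<le> M)\<close> through a new object \<open>X\<close> extends the
  pseudofunctor to \<open>P \<union> {x}\<close>, with \<open>x \<mapsto> X\<close>, \<open>a \<le> x\<close> sent to \<open>u \<circ> F(a \<le> m)\<close> and \<open>x \<le> b\<close> to
  \<open>F(M \<le> b) \<circ> v\<close>.  Its proof reduces the pseudofunctor axioms to four pasting identities,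
  one for each position the new point can take in a chain \<open>a \<le> b \<le> c \<le> d\<close>.

  The simplex sits on the diagonal of \<open>\<Delta>\<^sub>n\<close>; we fill the rows \<open>k = 1, \<dots>, n\<close> in turn, and
  each row from right to left, inserting \<open>(k, l)\<close> with \<open>m = (k - 1, l)\<close>, \<open>M = (k, l + 1)\<close>,
  and \<open>u \<in> A\<close>, \<open>v \<in> B\<close> chosen by the factorisation hypothesis applied to \<open>F(m \<le> M)\<close>.
  Closure of \<open>A\<close> and \<open>B\<close> under composition keeps horizontal arrows in \<open>A\<close> and
  vertical ones in \<open>B\<close>.
\<close>

section \<open>Basic calculus in a (2,1)-category\<close>

locale two_one_cat =
  fixes C :: "('o, 'm, 'c) twocat"
  assumes two_one: "two_one_category C"
begin

lemma is_two_category: "two_category C"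
  using two_one unfolding two_one_category_def by blast

lemmas two_category_axioms = is_two_category[unfolded two_category_def]

abbreviation vcomp :: "'c \<Rightarrow> 'c \<Rightarrow> 'c" (infixr "\<cdot>" 65) where "b \<cdot> a \<equiv> vcmp C b a"
abbreviation hcomp :: "'c \<Rightarrow> 'c \<Rightarrow> 'c" (infixr "\<star>" 70) where "b \<star> a \<equiv> hcmp C b a"
abbreviation comp :: "'m \<Rightarrow> 'm \<Rightarrow> 'm" (infixr "\<odot>" 75) where "g \<odot> f \<equiv> cmp C g f"
abbreviation id\<^sub>2 :: "'m \<Rightarrow> 'c" where "id\<^sub>2 f \<equiv> ide2 C f"

lemma arr_src[simp]: "f \<in> arr C \<Longrightarrow> src C f \<in> obj C"
  using two_category_axioms by (elim conjE) blast

lemma arr_trg[simp]: "f \<in> arr C \<Longrightarrow> trg C f \<in> obj C"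
  using two_category_axioms by (elim conjE) blast

lemma ide_arr[simp]: "X \<in> obj C \<Longrightarrow> ide C X \<in> arr C"
  using two_category_axioms by (elim conjE) blast

lemma ide_src[simp]: "X \<in> obj C \<Longrightarrow> src C (ide C X) = X"
  using two_category_axioms by (elim conjE) blast

lemma ide_trg[simp]: "X \<in> obj C \<Longrightarrow> trg C (ide C X) = X"
  using two_category_axioms by (elim conjE) blast

lemma cmp_arr[simp]: "f \<in> arr C \<Longrightarrow> g \<in> arr C \<Longrightarrow> src C g = trg C f \<Longrightarrow> g \<odot> f \<in> arr C"
  using two_category_axioms by (elim conjE) blast

lemma cmp_src[simp]: "f \<in> arr C \<Longrightarrow> g \<in> arr C \<Longrightarrow> src C g = trg C f \<Longrightarrow> src C (g \<odot> f) = src C f"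
  using two_category_axioms by (elim conjE) blast

lemma cmp_trg[simp]: "f \<in> arr C \<Longrightarrow> g \<in> arr C \<Longrightarrow> src C g = trg C f \<Longrightarrow> trg C (g \<odot> f) = trg C g"
  using two_category_axioms by (elim conjE) blast

lemma cmp_ide_r[simp]: "f \<in> arr C \<Longrightarrow> X = src C f \<Longrightarrow> f \<odot> ide C X = f"
  using two_category_axioms by (elim conjE) blast

lemma cmp_ide_l[simp]: "f \<in> arr C \<Longrightarrow> X = trg C f \<Longrightarrow> ide C X \<odot> f = f"
  using two_category_axioms by (elim conjE) blast

lemma cmp_assoc[simp]:
  "f \<in> arr C \<Longrightarrow> g \<in> arr C \<Longrightarrow> h \<in> arr C \<Longrightarrow> src C g = trg C f \<Longrightarrow> src C h = trg C g \<Longrightarrow>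
   (h \<odot> g) \<odot> f = h \<odot> (g \<odot> f)"
  using two_category_axioms by (elim conjE) (rule sym, blast)

lemma cel_src2[simp]: "a \<in> cel C \<Longrightarrow> src2 C a \<in> arr C"
  using two_category_axioms by (elim conjE) blast

lemma cel_trg2[simp]: "a \<in> cel C \<Longrightarrow> trg2 C a \<in> arr C"
  using two_category_axioms by (elim conjE) blast

lemma ide2_cel[simp]: "f \<in> arr C \<Longrightarrow> id\<^sub>2 f \<in> cel C"
  using two_category_axioms by (elim conjE) blast

lemma ide2_src2[simp]: "f \<in> arr C \<Longrightarrow> src2 C (id\<^sub>2 f) = f"
  using two_category_axioms by (elim conjE) blast

lemma ide2_trg2[simp]: "f \<in> arr C \<Longrightarrow> trg2 C (id\<^sub>2 f) = f"
  using two_category_axioms by (elim conjE) blast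

lemma vcmp_cel[simp]: "a \<in> cel C \<Longrightarrow> b \<in> cel C \<Longrightarrow> src2 C b = trg2 C a \<Longrightarrow> b \<cdot> a \<in> cel C"
  using two_category_axioms by (elim conjE) blast

lemma vcmp_src2[simp]:
    "a \<in> cel C \<Longrightarrow> b \<in> cel C \<Longrightarrow> src2 C b = trg2 C a \<Longrightarrow> src2 C (b \<cdot> a) = src2 C a"
  using two_category_axioms by (elim conjE) blast

lemma vcmp_trg2[simp]:
    "a \<in> cel C \<Longrightarrow> b \<in> cel C \<Longrightarrow> src2 C b = trg2 C a \<Longrightarrow> trg2 C (b \<cdot> a) = trg2 C b"
  using two_category_axioms by (elim conjE) blast

lemma vcmp_ide_r[simp]: "a \<in> cel C \<Longrightarrow> f = src2 C a \<Longrightarrow> a \<cdot> id\<^sub>2 f = a"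
  using two_category_axioms by (elim conjE) blast

lemma vcmp_ide_l[simp]: "a \<in> cel C \<Longrightarrow> f = trg2 C a \<Longrightarrow> id\<^sub>2 f \<cdot> a = a"
  using two_category_axioms by (elim conjE) blast

lemma vcmp_assoc:
  "a \<in> cel C \<Longrightarrow> b \<in> cel C \<Longrightarrow> c \<in> cel C \<Longrightarrow> src2 C b = trg2 C a \<Longrightarrow> src2 C c = trg2 C b \<Longrightarrow>
   (c \<cdot> b) \<cdot> a = c \<cdot> (b \<cdot> a)"
  using two_category_axioms by (elim conjE) (rule sym, blast)

lemma hcmp_cel[simp]:
    "a \<in> cel C \<Longrightarrow> b \<in> cel C \<Longrightarrow> src C (src2 C b) = trg C (src2 C a) \<Longrightarrow> b \<star> a \<in> cel C"
  using two_category_axioms by (elim conjE) blast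

lemma hcmp_src2[simp]: "a \<in> cel C \<Longrightarrow> b \<in> cel C \<Longrightarrow> src C (src2 C b) = trg C (src2 C a) \<Longrightarrow>
    src2 C (b \<star> a) = src2 C b \<odot> src2 C a"
  using two_category_axioms by (elim conjE) blast

lemma hcmp_trg2[simp]: "a \<in> cel C \<Longrightarrow> b \<in> cel C \<Longrightarrow> src C (src2 C b) = trg C (src2 C a) \<Longrightarrow>
    trg2 C (b \<star> a) = trg2 C b \<odot> trg2 C a"
  using two_category_axioms by (elim conjE) blast

lemma hcmp_ide2[simp]: "f \<in> arr C \<Longrightarrow> g \<in> arr C \<Longrightarrow> src C g = trg C f \<Longrightarrow>
    id\<^sub>2 g \<star> id\<^sub>2 f = id\<^sub>2 (g \<odot> f)"
  using two_category_axioms by (elim conjE) blast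

lemma hcmp_unit_r[simp]: "a \<in> cel C \<Longrightarrow> X = src C (src2 C a) \<Longrightarrow> a \<star> id\<^sub>2 (ide C X) = a"
  using two_category_axioms by (elim conjE, hypsubst, blast)

lemma hcmp_unit_l[simp]: "a \<in> cel C \<Longrightarrow> X = trg C (src2 C a) \<Longrightarrow> id\<^sub>2 (ide C X) \<star> a = a"
  using two_category_axioms by (elim conjE, hypsubst, blast)

lemma hcmp_assoc:
  "a \<in> cel C \<Longrightarrow> b \<in> cel C \<Longrightarrow> c \<in> cel C \<Longrightarrow>
   src C (src2 C b) = trg C (src2 C a) \<Longrightarrow> src C (src2 C c) = trg C (src2 C b) \<Longrightarrow>
   (c \<star> b) \<star> a = c \<star> (b \<star> a)"
  using two_category_axioms by (elim conjE) (rule sym, metis)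

lemma interchange:
  assumes "a \<in> cel C" "a' \<in> cel C" "b \<in> cel C" "b' \<in> cel C"
    and "src2 C a' = trg2 C a" "src2 C b' = trg2 C b" "src C (src2 C b) = trg C (src2 C a)"
  shows "(b' \<star> a') \<cdot> (b \<star> a) = (b' \<cdot> b) \<star> (a' \<cdot> a)"
proof -
  have law: "\<forall>a\<in>cel C. \<forall>a'\<in>cel C. \<forall>b\<in>cel C. \<forall>b'\<in>cel C.
        src2 C a' = trg2 C a \<and> src2 C b' = trg2 C b \<and> src C (src2 C b) = trg C (src2 C a) \<longrightarrow>
        (b' \<cdot> b) \<star> (a' \<cdot> a) = (b' \<star> a') \<cdot> (b \<star> a)"
    using two_category_axioms by (elim conjE) assumption
  show ?thesis
    using assms by (intro law[rule_format, THEN sym]) auto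
qed

lemma iso2_iff_cel: "iso2 C a \<longleftrightarrow> a \<in> cel C"
  using two_one unfolding two_one_category_def iso2_def by blast

lemma whisker_left_vcmp:
  "a \<in> cel C \<Longrightarrow> b \<in> cel C \<Longrightarrow> src2 C b = trg2 C a \<Longrightarrow> h \<in> arr C \<Longrightarrow> src C h = trg C (src2 C a) \<Longrightarrow>
   id\<^sub>2 h \<star> (b \<cdot> a) = (id\<^sub>2 h \<star> b) \<cdot> (id\<^sub>2 h \<star> a)"
  by (subst interchange) auto

lemma whisker_right_vcmp:
  "a \<in> cel C \<Longrightarrow> b \<in> cel C \<Longrightarrow> src2 C b = trg2 C a \<Longrightarrow> h \<in> arr C \<Longrightarrow> trg C h = src C (src2 C a) \<Longrightarrow>
   (b \<cdot> a) \<star> id\<^sub>2 h = (b \<star> id\<^sub>2 h) \<cdot> (a \<star> id\<^sub>2 h)"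
  by (subst interchange) auto

text \<open>Sliding two 2-cells past each other: both sides equal \<open>b \<star> a\<close>.\<close>

lemma whisker_exchange:
  assumes "a \<in> cel C" "b \<in> cel C" "src C (src2 C b) = trg C (src2 C a)"
  shows "(b \<star> id\<^sub>2 (trg2 C a)) \<cdot> (id\<^sub>2 (src2 C b) \<star> a) =
         (id\<^sub>2 (trg2 C b) \<star> a) \<cdot> (b \<star> id\<^sub>2 (src2 C a))"
proof -
  have "(b \<star> id\<^sub>2 (trg2 C a)) \<cdot> (id\<^sub>2 (src2 C b) \<star> a) = b \<star> a"
    using assms by (subst interchange) auto
  moreover have "(id\<^sub>2 (trg2 C b) \<star> a) \<cdot> (b \<star> id\<^sub>2 (src2 C a)) = b \<star> a"
    using assms by (subst interchange) auto
  ultimately show ?thesis by simp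
qed

definition hom :: "'m \<Rightarrow> 'o \<Rightarrow> 'o \<Rightarrow> bool" where
  "hom f X Y \<longleftrightarrow> f \<in> arr C \<and> src C f = X \<and> trg C f = Y"

definition cell2 :: "'c \<Rightarrow> 'm \<Rightarrow> 'm \<Rightarrow> bool" where
  "cell2 a f g \<longleftrightarrow> a \<in> cel C \<and> src2 C a = f \<and> trg2 C a = g"

text \<open>The four pasting identities behind the one-point extension.  Each one derives the
  cocycle condition of the extended pseudofunctor on a chain \<open>a \<le> b \<le> c \<le> d\<close>
  containing the new point \<open>x\<close> once, from cocycle conditions of the old pseudofunctor.
  The old arrows into \<open>x\<close> end in \<open>u : F m \<rightarrow> X\<close>, the old arrows out of \<open>x\<close> start with
  \<open>v : X \<rightarrow> F M\<close>, and \<open>\<beta> : v \<circ> u \<Rightarrow> F(m \<le> M)\<close> glues the two.\<close>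

text \<open>The new point is \<open>d\<close>: whisker the old cocycle on \<open>a \<le> b \<le> c \<le> m\<close> by \<open>u\<close>.\<close>

lemma pasting_new_last:
  assumes H: "hom g12 Y1 Y2" "hom g23 Y2 Y3" "hom g13 Y1 Y3" "hom g3m Y3 Ym" "hom g2m Y2 Ym"
    "hom g1m Y1 Ym" "hom u Ym X" "cell2 c123 (g23 \<odot> g12) g13" "cell2 c13m (g3m \<odot> g13) g1m"
    "cell2 c12m (g2m \<odot> g12) g1m" "cell2 c23m (g3m \<odot> g23) g2m"
    and E: "c13m \<cdot> (id\<^sub>2 g3m \<star> c123) = c12m \<cdot> (c23m \<star> id\<^sub>2 g12)"
  shows "(id\<^sub>2 u \<star> c13m) \<cdot> (id\<^sub>2 (u \<odot> g3m) \<star> c123) =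
        (id\<^sub>2 u \<star> c12m) \<cdot> ((id\<^sub>2 u \<star> c23m) \<star> id\<^sub>2 g12)"
proof -
  note [simp] = H[unfolded hom_def cell2_def]
  have id_comp: "id\<^sub>2 (u \<odot> g3m) = id\<^sub>2 u \<star> id\<^sub>2 g3m" by simp
  have "(id\<^sub>2 u \<star> c13m) \<cdot> (id\<^sub>2 (u \<odot> g3m) \<star> c123)
      = id\<^sub>2 u \<star> (c13m \<cdot> (id\<^sub>2 g3m \<star> c123))"
    unfolding id_comp by (simp add: hcmp_assoc whisker_left_vcmp del: hcmp_ide2)
  also have "\<dots> = id\<^sub>2 u \<star> (c12m \<cdot> (c23m \<star> id\<^sub>2 g12))" using E by simp
  also have "\<dots> = (id\<^sub>2 u \<star> c12m) \<cdot> ((id\<^sub>2 u \<star> c23m) \<star> id\<^sub>2 g12)"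
    by (simp add: hcmp_assoc whisker_left_vcmp)
  finally show ?thesis .
qed

text \<open>The new point is \<open>a\<close>: whisker the old cocycle on \<open>M \<le> b \<le> c \<le> d\<close> by \<open>v\<close>.\<close>

lemma pasting_new_first:
  assumes H: "hom h1 YM Z1" "hom k12 Z1 Z2" "hom k23 Z2 Z3" "hom k13 Z1 Z3" "hom h2 YM Z2"
    "hom h3 YM Z3" "hom v X YM" "cell2 d123 (k23 \<odot> k12) k13" "cell2 dM12 (k12 \<odot> h1) h2"
    "cell2 dM23 (k23 \<odot> h2) h3" "cell2 dM13 (k13 \<odot> h1) h3"
    and E: "dM23 \<cdot> (id\<^sub>2 k23 \<star> dM12) = dM13 \<cdot> (d123 \<star> id\<^sub>2 h1)"
  shows "(dM23 \<star> id\<^sub>2 v) \<cdot> (id\<^sub>2 k23 \<star> (dM12 \<star> id\<^sub>2 v)) =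
        (dM13 \<star> id\<^sub>2 v) \<cdot> (d123 \<star> id\<^sub>2 (h1 \<odot> v))"
proof -
  note [simp] = H[unfolded hom_def cell2_def]
  have id_comp: "id\<^sub>2 (h1 \<odot> v) = id\<^sub>2 h1 \<star> id\<^sub>2 v" by simp
  have "(dM23 \<star> id\<^sub>2 v) \<cdot> (id\<^sub>2 k23 \<star> (dM12 \<star> id\<^sub>2 v))
      = (dM23 \<cdot> (id\<^sub>2 k23 \<star> dM12)) \<star> id\<^sub>2 v"
    by (simp add: hcmp_assoc[symmetric] whisker_right_vcmp)
  also have "\<dots> = (dM13 \<cdot> (d123 \<star> id\<^sub>2 h1)) \<star> id\<^sub>2 v" using E by simp
  also have "\<dots> = (dM13 \<star> id\<^sub>2 v) \<cdot> (d123 \<star> id\<^sub>2 (h1 \<odot> v))"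
    unfolding id_comp by (simp add: hcmp_assoc[symmetric] whisker_right_vcmp del: hcmp_ide2)
  finally show ?thesis .
qed

text \<open>The new point is \<open>c\<close>: combine the old cocycles on \<open>a \<le> b \<le> m \<le> M\<close> and
  \<open>a \<le> b \<le> M \<le> d\<close> with \<open>\<beta>\<close>.\<close>

lemma pasting_new_third:
  assumes H: "hom g1 Y1 Y2" "hom g2 Y2 Ym" "hom g12 Y1 Ym" "hom e Ym YM" "hom u Ym X"
    "hom v X YM" "hom h YM Z" "hom f1M Y1 YM" "hom f2M Y2 YM" "hom f1z Y1 Z" "hom f2z Y2 Z"
    "cell2 \<beta> (v \<odot> u) e" "cell2 c12m (g2 \<odot> g1) g12" "cell2 c1mM (e \<odot> g12) f1M"
    "cell2 c2mM (e \<odot> g2) f2M" "cell2 c12M (f2M \<odot> g1) f1M" "cell2 c1Mz (h \<odot> f1M) f1z"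
    "cell2 c2Mz (h \<odot> f2M) f2z" "cell2 c12z (f2z \<odot> g1) f1z"
    and E1: "c1mM \<cdot> (id\<^sub>2 e \<star> c12m) = c12M \<cdot> (c2mM \<star> id\<^sub>2 g1)"
    and E2: "c1Mz \<cdot> (id\<^sub>2 h \<star> c12M) = c12z \<cdot> (c2Mz \<star> id\<^sub>2 g1)"
  shows "(c1Mz \<cdot> ((id\<^sub>2 h \<star> c1mM) \<cdot> (id\<^sub>2 h \<star> (\<beta> \<star> id\<^sub>2 g12)))) \<cdot> (id\<^sub>2 (h \<odot> v) \<star> (id\<^sub>2 u \<star> c12m)) =
        c12z \<cdot> ((c2Mz \<cdot> ((id\<^sub>2 h \<star> c2mM) \<cdot> (id\<^sub>2 h \<star> (\<beta> \<star> id\<^sub>2 g2)))) \<star> id\<^sub>2 g1)"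
proof -
  note [simp] = H[unfolded hom_def cell2_def]
  have regroup: "id\<^sub>2 (h \<odot> v) \<star> (id\<^sub>2 u \<star> c12m) = id\<^sub>2 h \<star> (id\<^sub>2 (v \<odot> u) \<star> c12m)"
  proof -
    have "id\<^sub>2 (h \<odot> v) = id\<^sub>2 h \<star> id\<^sub>2 v" by simp
    moreover have "id\<^sub>2 (v \<odot> u) = id\<^sub>2 v \<star> id\<^sub>2 u" by simp
    ultimately show ?thesis by (simp add: hcmp_assoc del: hcmp_ide2)
  qed
  have slide: "(\<beta> \<star> id\<^sub>2 g12) \<cdot> (id\<^sub>2 (v \<odot> u) \<star> c12m) =
      (id\<^sub>2 e \<star> c12m) \<cdot> (\<beta> \<star> id\<^sub>2 (g2 \<odot> g1))"
    using whisker_exchange[of c12m \<beta>] by simp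
  have slide_under_h: "(id\<^sub>2 h \<star> (\<beta> \<star> id\<^sub>2 g12)) \<cdot> (id\<^sub>2 h \<star> (id\<^sub>2 (v \<odot> u) \<star> c12m))
     = (id\<^sub>2 h \<star> (id\<^sub>2 e \<star> c12m)) \<cdot> (id\<^sub>2 h \<star> (\<beta> \<star> id\<^sub>2 (g2 \<odot> g1)))"
  proof -
    have "(id\<^sub>2 h \<star> (\<beta> \<star> id\<^sub>2 g12)) \<cdot> (id\<^sub>2 h \<star> (id\<^sub>2 (v \<odot> u) \<star> c12m))
      = id\<^sub>2 h \<star> ((\<beta> \<star> id\<^sub>2 g12) \<cdot> (id\<^sub>2 (v \<odot> u) \<star> c12m))"
      by (subst whisker_left_vcmp) simp_all
    also have "\<dots> = id\<^sub>2 h \<star> ((id\<^sub>2 e \<star> c12m) \<cdot> (\<beta> \<star> id\<^sub>2 (g2 \<odot> g1)))"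
      using slide by simp
    also have "\<dots> = (id\<^sub>2 h \<star> (id\<^sub>2 e \<star> c12m)) \<cdot> (id\<^sub>2 h \<star> (\<beta> \<star> id\<^sub>2 (g2 \<odot> g1)))"
      by (subst whisker_left_vcmp) simp_all
    finally show ?thesis .
  qed
  have old_cocycle_under_h: "(id\<^sub>2 h \<star> c1mM) \<cdot> (id\<^sub>2 h \<star> (id\<^sub>2 e \<star> c12m))
     = (id\<^sub>2 h \<star> c12M) \<cdot> (id\<^sub>2 h \<star> (c2mM \<star> id\<^sub>2 g1))"
  proof -
    have "(id\<^sub>2 h \<star> c1mM) \<cdot> (id\<^sub>2 h \<star> (id\<^sub>2 e \<star> c12m))
        = id\<^sub>2 h \<star> (c1mM \<cdot> (id\<^sub>2 e \<star> c12m))" by (subst whisker_left_vcmp) simp_all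
    also have "\<dots> = id\<^sub>2 h \<star> (c12M \<cdot> (c2mM \<star> id\<^sub>2 g1))" using E1 by simp
    also have "\<dots> = (id\<^sub>2 h \<star> c12M) \<cdot> (id\<^sub>2 h \<star> (c2mM \<star> id\<^sub>2 g1))"
      by (subst whisker_left_vcmp) simp_all
    finally show ?thesis .
  qed
  let ?rearranged = "c12z \<cdot> ((c2Mz \<star> id\<^sub>2 g1) \<cdot>
      ((id\<^sub>2 h \<star> (c2mM \<star> id\<^sub>2 g1)) \<cdot> (id\<^sub>2 h \<star> (\<beta> \<star> id\<^sub>2 (g2 \<odot> g1)))))"
  have "(c1Mz \<cdot> ((id\<^sub>2 h \<star> c1mM) \<cdot> (id\<^sub>2 h \<star> (\<beta> \<star> id\<^sub>2 g12)))) \<cdot> (id\<^sub>2 (h \<odot> v) \<star> (id\<^sub>2 u \<star> c12m))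
     = c1Mz \<cdot> ((id\<^sub>2 h \<star> c1mM) \<cdot> ((id\<^sub>2 h \<star> (\<beta> \<star> id\<^sub>2 g12)) \<cdot> (id\<^sub>2 h \<star> (id\<^sub>2 (v \<odot> u) \<star> c12m))))"
    unfolding regroup by (simp add: vcmp_assoc)
  also have "\<dots> = c1Mz \<cdot> (((id\<^sub>2 h \<star> c1mM) \<cdot> (id\<^sub>2 h \<star> (id\<^sub>2 e \<star> c12m))) \<cdot>
      (id\<^sub>2 h \<star> (\<beta> \<star> id\<^sub>2 (g2 \<odot> g1))))"
    unfolding slide_under_h by (simp add: vcmp_assoc)
  also have "\<dots> = (c1Mz \<cdot> (id\<^sub>2 h \<star> c12M)) \<cdot>
      ((id\<^sub>2 h \<star> (c2mM \<star> id\<^sub>2 g1)) \<cdot> (id\<^sub>2 h \<star> (\<beta> \<star> id\<^sub>2 (g2 \<odot> g1))))"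
    unfolding old_cocycle_under_h by (simp add: vcmp_assoc)
  also have "\<dots> = ?rearranged"
    unfolding E2 by (simp add: vcmp_assoc)
  also have "\<dots> = c12z \<cdot> ((c2Mz \<cdot> ((id\<^sub>2 h \<star> c2mM) \<cdot> (id\<^sub>2 h \<star> (\<beta> \<star> id\<^sub>2 g2)))) \<star> id\<^sub>2 g1)"
  proof -
    have reassoc1: "(id\<^sub>2 h \<star> c2mM) \<star> id\<^sub>2 g1 = id\<^sub>2 h \<star> (c2mM \<star> id\<^sub>2 g1)"
      by (simp add: hcmp_assoc)
    have reassoc2: "(id\<^sub>2 h \<star> (\<beta> \<star> id\<^sub>2 g2)) \<star> id\<^sub>2 g1 = id\<^sub>2 h \<star> (\<beta> \<star> id\<^sub>2 (g2 \<odot> g1))"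
    proof -
      have "id\<^sub>2 (g2 \<odot> g1) = id\<^sub>2 g2 \<star> id\<^sub>2 g1" by simp
      then show ?thesis by (simp add: hcmp_assoc del: hcmp_ide2)
    qed
    show ?thesis by (simp add: whisker_right_vcmp reassoc1 reassoc2 del: hcmp_ide2)
  qed
  finally show ?thesis .
qed

text \<open>The new point is \<open>b\<close>: the old cocycle on \<open>a \<le> M \<le> c \<le> d\<close> combined with \<open>\<beta>\<close>.\<close>

lemma pasting_new_second:
  assumes H: "hom f Y Ym" "hom e Ym YM" "hom u Ym X" "hom v X YM" "hom h1 YM Z1" "hom h2 YM Z2"
    "hom k Z1 Z2" "hom fM Y YM" "hom f1 Y Z1" "hom f2 Y Z2" "cell2 \<beta> (v \<odot> u) e"
    "cell2 cymM (e \<odot> f) fM" "cell2 cyMz1 (h1 \<odot> fM) f1" "cell2 cyMz2 (h2 \<odot> fM) f2"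
    "cell2 cM12 (k \<odot> h1) h2" "cell2 cy12 (k \<odot> f1) f2"
    and E: "cy12 \<cdot> (id\<^sub>2 k \<star> cyMz1) = cyMz2 \<cdot> (cM12 \<star> id\<^sub>2 fM)"
  shows "cy12 \<cdot> (id\<^sub>2 k \<star> (cyMz1 \<cdot> ((id\<^sub>2 h1 \<star> cymM) \<cdot> (id\<^sub>2 h1 \<star> (\<beta> \<star> id\<^sub>2 f))))) =
        (cyMz2 \<cdot> ((id\<^sub>2 h2 \<star> cymM) \<cdot> (id\<^sub>2 h2 \<star> (\<beta> \<star> id\<^sub>2 f)))) \<cdot> ((cM12 \<star> id\<^sub>2 v) \<star> id\<^sub>2 (u \<odot> f))"
proof -
  note [simp] = H[unfolded hom_def cell2_def]
  have id_comp: "id\<^sub>2 (k \<odot> h1) = id\<^sub>2 k \<star> id\<^sub>2 h1" by simp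
  have reassoc1: "id\<^sub>2 k \<star> (id\<^sub>2 h1 \<star> cymM) = id\<^sub>2 (k \<odot> h1) \<star> cymM"
    unfolding id_comp by (simp add: hcmp_assoc del: hcmp_ide2)
  have reassoc2: "id\<^sub>2 k \<star> (id\<^sub>2 h1 \<star> (\<beta> \<star> id\<^sub>2 f)) = id\<^sub>2 (k \<odot> h1) \<star> (\<beta> \<star> id\<^sub>2 f)"
    unfolding id_comp by (simp add: hcmp_assoc del: hcmp_ide2)
  have lhs_regrouped: "cy12 \<cdot> (id\<^sub>2 k \<star> (cyMz1 \<cdot> ((id\<^sub>2 h1 \<star> cymM) \<cdot> (id\<^sub>2 h1 \<star> (\<beta> \<star> id\<^sub>2 f)))))
     = (cy12 \<cdot> (id\<^sub>2 k \<star> cyMz1)) \<cdot> ((id\<^sub>2 (k \<odot> h1) \<star> cymM) \<cdot> (id\<^sub>2 (k \<odot> h1) \<star> (\<beta> \<star> id\<^sub>2 f)))"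
    by (simp add: whisker_left_vcmp vcmp_assoc reassoc1 reassoc2 del: hcmp_ide2)
  have id_comp': "id\<^sub>2 (v \<odot> (u \<odot> f)) = id\<^sub>2 v \<star> id\<^sub>2 (u \<odot> f)" by simp
  have reassoc3: "(cM12 \<star> id\<^sub>2 v) \<star> id\<^sub>2 (u \<odot> f) = cM12 \<star> id\<^sub>2 (v \<odot> (u \<odot> f))"
    unfolding id_comp' by (simp add: hcmp_assoc del: hcmp_ide2)
  have slide1: "(id\<^sub>2 h2 \<star> (\<beta> \<star> id\<^sub>2 f)) \<cdot> (cM12 \<star> id\<^sub>2 (v \<odot> (u \<odot> f)))
       = (cM12 \<star> id\<^sub>2 (e \<odot> f)) \<cdot> (id\<^sub>2 (k \<odot> h1) \<star> (\<beta> \<star> id\<^sub>2 f))"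
    using whisker_exchange[of "\<beta> \<star> id\<^sub>2 f" cM12] by simp
  have slide2: "(id\<^sub>2 h2 \<star> cymM) \<cdot> (cM12 \<star> id\<^sub>2 (e \<odot> f))
       = (cM12 \<star> id\<^sub>2 fM) \<cdot> (id\<^sub>2 (k \<odot> h1) \<star> cymM)"
    using whisker_exchange[of cymM cM12] by simp
  have "(cyMz2 \<cdot> ((id\<^sub>2 h2 \<star> cymM) \<cdot> (id\<^sub>2 h2 \<star> (\<beta> \<star> id\<^sub>2 f)))) \<cdot> ((cM12 \<star> id\<^sub>2 v) \<star> id\<^sub>2 (u \<odot> f))
     = cyMz2 \<cdot> (((id\<^sub>2 h2 \<star> cymM) \<cdot> (cM12 \<star> id\<^sub>2 (e \<odot> f))) \<cdot> (id\<^sub>2 (k \<odot> h1) \<star> (\<beta> \<star> id\<^sub>2 f)))"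
    unfolding reassoc3 using slide1 by (simp add: vcmp_assoc)
  also have "\<dots> = (cyMz2 \<cdot> (cM12 \<star> id\<^sub>2 fM)) \<cdot>
      ((id\<^sub>2 (k \<odot> h1) \<star> cymM) \<cdot> (id\<^sub>2 (k \<odot> h1) \<star> (\<beta> \<star> id\<^sub>2 f)))"
    unfolding slide2 by (simp add: vcmp_assoc)
  finally show ?thesis using lhs_regrouped E by simp
qed

section \<open>Strictly unital pseudofunctors on posets\<close>

definition cocycle ::
  "'i \<Rightarrow> 'i \<Rightarrow> 'i \<Rightarrow> 'i \<Rightarrow> ('i \<Rightarrow> 'i \<Rightarrow> 'm) \<Rightarrow> ('i \<Rightarrow> 'i \<Rightarrow> 'i \<Rightarrow> 'c) \<Rightarrow> bool" where
  "cocycle a b c d F1 F2 \<longleftrightarrow>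
     F2 a c d \<cdot> (id\<^sub>2 (F1 c d) \<star> F2 a b c) =
     F2 a b d \<cdot> (F2 b c d \<star> id\<^sub>2 (F1 a b))"

text \<open>The definition of a strictly unital pseudofunctor, restated with the typing
  judgements; invertibility of the compositors is automatic in a (2,1)-category.\<close>

lemma su_pseudofunctor_iff:
  "su_pseudofunctor C I le F0 F1 F2 \<longleftrightarrow>
   (\<forall>a\<in>I. F0 a \<in> obj C) \<and>
   (\<forall>a\<in>I. \<forall>b\<in>I. le a b \<longrightarrow> hom (F1 a b) (F0 a) (F0 b)) \<and>
   (\<forall>a\<in>I. F1 a a = ide C (F0 a)) \<and>
   (\<forall>a\<in>I. \<forall>b\<in>I. \<forall>c\<in>I. le a b \<and> le b c \<longrightarrow>
      cell2 (F2 a b c) (F1 b c \<odot> F1 a b) (F1 a c)) \<and>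
   (\<forall>a\<in>I. \<forall>b\<in>I. le a b \<longrightarrow> F2 a a b = id\<^sub>2 (F1 a b) \<and> F2 a b b = id\<^sub>2 (F1 a b)) \<and>
   (\<forall>a\<in>I. \<forall>b\<in>I. \<forall>c\<in>I. \<forall>d\<in>I. le a b \<and> le b c \<and> le c d \<longrightarrow> cocycle a b c d F1 F2)"
  unfolding su_pseudofunctor_def hom_def cell2_def cocycle_def iso2_iff_cel by auto

lemma cocycle_degenerate:
  assumes "hom (F1 a b) Xa Xb" "hom (F1 b c) Xb Xc" "hom (F1 c d) Xc Xd"
    "hom (F1 a c) Xa Xc" "hom (F1 b d) Xb Xd" "hom (F1 a d) Xa Xd"
    "cell2 (F2 a b c) (F1 b c \<odot> F1 a b) (F1 a c)"
    "cell2 (F2 a b d) (F1 b d \<odot> F1 a b) (F1 a d)"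
    "cell2 (F2 a c d) (F1 c d \<odot> F1 a c) (F1 a d)"
    "cell2 (F2 b c d) (F1 c d \<odot> F1 b c) (F1 b d)"
    "F1 a a = ide C Xa" "F1 c c = ide C Xc"
    "F2 a a c = id\<^sub>2 (F1 a c)" "F2 a a d = id\<^sub>2 (F1 a d)" "F2 a b b = id\<^sub>2 (F1 a b)"
    "F2 b b d = id\<^sub>2 (F1 b d)" "F2 a c c = id\<^sub>2 (F1 a c)" "F2 b c c = id\<^sub>2 (F1 b c)"
    and repetition: "a = b \<or> b = c \<or> c = d"
  shows "cocycle a b c d F1 F2"
  using assms unfolding cocycle_def hom_def cell2_def by (elim disjE) auto

end

section \<open>Extending a pseudofunctor by one point\<close>

locale point_insertion = two_one_cat C
  for C :: "('o, 'm, 'c) twocat" +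
  fixes P :: "'i set" and le :: "'i \<Rightarrow> 'i \<Rightarrow> bool"
    and F0 :: "'i \<Rightarrow> 'o" and F1 :: "'i \<Rightarrow> 'i \<Rightarrow> 'm" and F2 :: "'i \<Rightarrow> 'i \<Rightarrow> 'i \<Rightarrow> 'c"
    and x m M :: 'i and u v :: 'm and \<beta> :: 'c and X :: 'o
  assumes old_pseudofunctor: "su_pseudofunctor C P le F0 F1 F2"
    and order_trans: "le a b \<Longrightarrow> le b c \<Longrightarrow> le a c"
    and order_antisym: "le a b \<Longrightarrow> le b a \<Longrightarrow> a = b"
    and new_point: "x \<notin> P"
    and lower_in: "m \<in> P" and upper_in: "M \<in> P" and lower_upper: "le m M"
    and below_new: "y \<in> P \<Longrightarrow> le y x \<longleftrightarrow> le y m"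
    and above_new: "z \<in> P \<Longrightarrow> le x z \<longleftrightarrow> le M z"
    and u_hom: "hom u (F0 m) X" and v_hom: "hom v X (F0 M)"
    and glue: "cell2 \<beta> (v \<odot> u) (F1 m M)"
begin

lemma old_obj: "a \<in> P \<Longrightarrow> F0 a \<in> obj C"
  and old_hom: "a \<in> P \<Longrightarrow> b \<in> P \<Longrightarrow> le a b \<Longrightarrow> hom (F1 a b) (F0 a) (F0 b)"
  and old_unit: "a \<in> P \<Longrightarrow> F1 a a = ide C (F0 a)"
  and old_comp: "a \<in> P \<Longrightarrow> b \<in> P \<Longrightarrow> c \<in> P \<Longrightarrow> le a b \<Longrightarrow> le b c \<Longrightarrow>
    cell2 (F2 a b c) (F1 b c \<odot> F1 a b) (F1 a c)"
  and old_norm_l: "a \<in> P \<Longrightarrow> b \<in> P \<Longrightarrow> le a b \<Longrightarrow> F2 a a b = id\<^sub>2 (F1 a b)"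
  and old_norm_r: "a \<in> P \<Longrightarrow> b \<in> P \<Longrightarrow> le a b \<Longrightarrow> F2 a b b = id\<^sub>2 (F1 a b)"
  and old_cocycle: "a \<in> P \<Longrightarrow> b \<in> P \<Longrightarrow> c \<in> P \<Longrightarrow> d \<in> P \<Longrightarrow> le a b \<Longrightarrow> le b c \<Longrightarrow> le c d \<Longrightarrow>
    cocycle a b c d F1 F2"
  using old_pseudofunctor unfolding su_pseudofunctor_iff by blast+

lemma new_obj: "X \<in> obj C"
  using u_hom unfolding hom_def by auto

lemma not_around_new: "b \<in> P \<Longrightarrow> le x b \<Longrightarrow> le b x \<Longrightarrow> False"
  using order_antisym new_point by blast

definition ext_obj :: "'i \<Rightarrow> 'o" where
  "ext_obj = F0(x := X)"

definition ext_arr :: "'i \<Rightarrow> 'i \<Rightarrow> 'm" where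
  "ext_arr a b =
     (if a = x \<and> b = x then ide C X
      else if b = x then u \<odot> F1 a m
      else if a = x then F1 M b \<odot> v
      else F1 a b)"

text \<open>The compositor \<open>(F(M \<le> c) \<circ> v) \<circ> (u \<circ> F(a \<le> m)) \<Rightarrow> F(a \<le> c)\<close>: glue \<open>v \<circ> u\<close> into
  \<open>F(m \<le> M)\<close> with \<open>\<beta>\<close>, then compose along \<open>a \<le> m \<le> M \<le> c\<close> with the old compositors.\<close>

definition through_new :: "'i \<Rightarrow> 'i \<Rightarrow> 'c" where
  "through_new a c =
     F2 a M c \<cdot> ((id\<^sub>2 (F1 M c) \<star> F2 a m M) \<cdot> (id\<^sub>2 (F1 M c) \<star> (\<beta> \<star> id\<^sub>2 (F1 a m))))"

definition ext_cell :: "'i \<Rightarrow> 'i \<Rightarrow> 'i \<Rightarrow> 'c" where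
  "ext_cell a b c =
     (if c = x then (if b = x then id\<^sub>2 (ext_arr a x) else id\<^sub>2 u \<star> F2 a b m)
      else if b = x then (if a = x then id\<^sub>2 (ext_arr x c) else through_new a c)
      else if a = x then F2 M b c \<star> id\<^sub>2 v
      else F2 a b c)"

lemma ext_obj_new: "ext_obj x = X"
  and ext_obj_old: "a \<in> P \<Longrightarrow> ext_obj a = F0 a"
  using new_point unfolding ext_obj_def by auto

lemma ext_arr_new_new: "ext_arr x x = ide C X"
  and ext_arr_to_new: "a \<noteq> x \<Longrightarrow> ext_arr a x = u \<odot> F1 a m"
  and ext_arr_from_new: "b \<noteq> x \<Longrightarrow> ext_arr x b = F1 M b \<odot> v"
  and ext_arr_old: "a \<noteq> x \<Longrightarrow> b \<noteq> x \<Longrightarrow> ext_arr a b = F1 a b"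
  unfolding ext_arr_def by auto

lemma ext_cell_new_new_new: "ext_cell x x x = id\<^sub>2 (ide C X)"
  and ext_cell_to_new_new: "a \<noteq> x \<Longrightarrow> ext_cell a x x = id\<^sub>2 (u \<odot> F1 a m)"
  and ext_cell_to_new: "b \<noteq> x \<Longrightarrow> ext_cell a b x = id\<^sub>2 u \<star> F2 a b m"
  and ext_cell_new_new_from: "c \<noteq> x \<Longrightarrow> ext_cell x x c = id\<^sub>2 (F1 M c \<odot> v)"
  and ext_cell_through: "a \<noteq> x \<Longrightarrow> c \<noteq> x \<Longrightarrow> ext_cell a x c = through_new a c"
  and ext_cell_from_new: "b \<noteq> x \<Longrightarrow> c \<noteq> x \<Longrightarrow> ext_cell x b c = F2 M b c \<star> id\<^sub>2 v"
  and ext_cell_old: "a \<noteq> x \<Longrightarrow> b \<noteq> x \<Longrightarrow> c \<noteq> x \<Longrightarrow> ext_cell a b c = F2 a b c"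
  unfolding ext_cell_def ext_arr_def by auto

lemmas u_hom' = u_hom[unfolded hom_def] and v_hom' = v_hom[unfolded hom_def]
  and glue' = glue[unfolded cell2_def]

lemma ext_hom:
  assumes a: "a \<in> insert x P" and b: "b \<in> insert x P" and ab: "le a b"
  shows "hom (ext_arr a b) (ext_obj a) (ext_obj b)"
proof (cases "a = x")
  case ax: True
  show ?thesis
  proof (cases "b = x")
    case True
    then show ?thesis using ax new_obj by (simp add: ext_arr_new_new ext_obj_new hom_def)
  next
    case bx: False
    then have bP: "b \<in> P" and Mb: "le M b" using b ab ax above_new by auto
    show ?thesis using old_hom[OF upper_in bP Mb] v_hom' ax
      by (simp add: ext_arr_from_new[OF bx] ext_obj_new ext_obj_old[OF bP] hom_def)
  qed
next
  case ax: False
  then have aP: "a \<in> P" using a by auto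
  show ?thesis
  proof (cases "b = x")
    case bx: True
    then have am: "le a m" using ab below_new aP by auto
    show ?thesis using old_hom[OF aP lower_in am] u_hom' bx
      by (simp add: ext_arr_to_new[OF ax] ext_obj_new ext_obj_old[OF aP] hom_def)
  next
    case bx: False
    then have bP: "b \<in> P" using b by auto
    show ?thesis using old_hom[OF aP bP ab]
      unfolding ext_arr_old[OF ax bx] ext_obj_old[OF aP] ext_obj_old[OF bP] .
  qed
qed

lemma ext_unit:
  assumes "a \<in> insert x P"
  shows "ext_arr a a = ide C (ext_obj a)"
proof (cases "a = x")
  case True
  then show ?thesis by (simp add: ext_arr_new_new ext_obj_new)
next
  case False
  with assms have "a \<in> P" by simp
  with False show ?thesis by (simp add: ext_arr_old ext_obj_old old_unit)
qed

lemma ext_compositor_to_new: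
  assumes a: "a \<in> insert x P" and b: "b \<in> insert x P" and ab: "le a b" and bx: "le b x"
  shows "cell2 (ext_cell a b x) (ext_arr b x \<odot> ext_arr a b) (ext_arr a x)"
proof (cases "b = x")
  case b_new: True
  show ?thesis
  proof (cases "a = x")
    case True
    then show ?thesis using b_new new_obj
      by (simp add: ext_cell_new_new_new ext_arr_new_new cell2_def)
  next
    case ax: False
    then have aP: "a \<in> P" and am: "le a m" using a ab b_new below_new by auto
    show ?thesis using b_new old_hom[OF aP lower_in am] u_hom' new_obj
      by (simp add: ext_cell_to_new_new[OF ax] ext_arr_new_new ext_arr_to_new[OF ax]
          cell2_def hom_def)
  qed
next
  case b_old: False
  then have bP: "b \<in> P" and bm: "le b m" using b bx below_new by auto
  have ax: "a \<noteq> x" using not_around_new[OF bP] ab bx by auto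
  then have aP: "a \<in> P" using a by auto
  have am: "le a m" using order_trans[OF ab bm] .
  show ?thesis
    using old_comp[OF aP bP lower_in ab bm] old_hom[OF aP bP ab] old_hom[OF bP lower_in bm]
      old_hom[OF aP lower_in am] u_hom'
    unfolding ext_cell_to_new[OF b_old] ext_arr_to_new[OF ax] ext_arr_to_new[OF b_old]
      ext_arr_old[OF ax b_old] cell2_def hom_def
    by simp
qed

lemma ext_compositor_to_old:
  assumes a: "a \<in> insert x P" and b: "b \<in> insert x P" and cP: "c \<in> P"
    and ab: "le a b" and bc: "le b c"
  shows "cell2 (ext_cell a b c) (ext_arr b c \<odot> ext_arr a b) (ext_arr a c)"
proof -
  have cx: "c \<noteq> x" using cP new_point by auto
  show ?thesis
  proof (cases "b = x")
    case b_new: True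
    then have Mc: "le M c" using bc above_new cP by auto
    show ?thesis
    proof (cases "a = x")
      case True
      then show ?thesis using b_new old_hom[OF upper_in cP Mc] v_hom' new_obj
        by (simp add: ext_cell_new_new_from[OF cx] ext_arr_new_new ext_arr_from_new[OF cx]
            cell2_def hom_def)
    next
      case ax: False
      then have aP: "a \<in> P" and am: "le a m" using a ab b_new below_new by auto
      have aM: "le a M" using order_trans[OF am lower_upper] .
      show ?thesis
        using old_comp[OF aP upper_in cP aM Mc] old_comp[OF aP lower_in upper_in am lower_upper]
          old_hom[OF aP lower_in am] old_hom[OF lower_in upper_in lower_upper]
          old_hom[OF upper_in cP Mc] old_hom[OF aP upper_in aM] u_hom' v_hom' glue' b_new
        by (simp add: ext_cell_through[OF ax cx] ext_arr_to_new[OF ax] ext_arr_from_new[OF cx]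
            ext_arr_old[OF ax cx] cell2_def hom_def through_new_def)
    qed
  next
    case b_old: False
    then have bP: "b \<in> P" using b by auto
    show ?thesis
    proof (cases "a = x")
      case a_new: True
      then have Mb: "le M b" using ab above_new bP by auto
      show ?thesis
        using old_comp[OF upper_in bP cP Mb bc] old_hom[OF upper_in bP Mb] old_hom[OF bP cP bc]
          old_hom[OF upper_in cP order_trans[OF Mb bc]] v_hom' a_new
        by (simp add: ext_cell_from_new[OF b_old cx] ext_arr_from_new[OF b_old]
            ext_arr_from_new[OF cx] ext_arr_old[OF b_old cx] cell2_def hom_def)
    next
      case ax: False
      then have aP: "a \<in> P" using a by auto
      show ?thesis using old_comp[OF aP bP cP ab bc]
        unfolding ext_cell_old[OF ax b_old cx] ext_arr_old[OF ax b_old] ext_arr_old[OF b_old cx]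
          ext_arr_old[OF ax cx] .
    qed
  qed
qed

lemma ext_compositor:
  assumes "a \<in> insert x P" "b \<in> insert x P" "c \<in> insert x P" "le a b" "le b c"
  shows "cell2 (ext_cell a b c) (ext_arr b c \<odot> ext_arr a b) (ext_arr a c)"
  using assms ext_compositor_to_new ext_compositor_to_old by (cases "c = x") auto

lemma ext_normalised:
  assumes a: "a \<in> insert x P" and b: "b \<in> insert x P" and ab: "le a b"
  shows "ext_cell a a b = id\<^sub>2 (ext_arr a b) \<and> ext_cell a b b = id\<^sub>2 (ext_arr a b)"
proof (cases "a = x")
  case a_new: True
  show ?thesis
  proof (cases "b = x")
    case True
    then show ?thesis using a_new by (simp add: ext_cell_new_new_new ext_arr_new_new)
  next
    case bx: False
    then have bP: "b \<in> P" and Mb: "le M b" using b ab a_new above_new by auto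
    show ?thesis
      using a_new old_norm_r[OF upper_in bP Mb] old_hom[OF upper_in bP Mb] v_hom'
      by (simp add: ext_cell_new_new_from[OF bx] ext_cell_from_new[OF bx bx] ext_arr_from_new[OF bx]
          hom_def)
  qed
next
  case ax: False
  then have aP: "a \<in> P" using a by auto
  show ?thesis
  proof (cases "b = x")
    case b_new: True
    then have am: "le a m" using ab below_new aP by auto
    show ?thesis
      using b_new old_norm_l[OF aP lower_in am] old_hom[OF aP lower_in am] u_hom'
      by (simp add: ext_cell_to_new[OF ax] ext_cell_to_new_new[OF ax] ext_arr_to_new[OF ax] hom_def)
  next
    case bx: False
    then have "b \<in> P" using b by auto
    then show ?thesis using old_norm_l[OF aP _ ab] old_norm_r[OF aP _ ab]
      unfolding ext_cell_old[OF ax ax bx] ext_cell_old[OF ax bx bx] ext_arr_old[OF ax bx] by simp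
  qed
qed

lemma old_ne_new: "a \<in> P \<Longrightarrow> a \<noteq> x"
  using new_point by auto

lemma ext_cocycle_new_last:
  assumes aP: "a \<in> P" and bP: "b \<in> P" and cP: "c \<in> P"
    and ab: "le a b" and bc: "le b c" and cx: "le c x"
  shows "cocycle a b c x ext_arr ext_cell"
proof -
  have cm: "le c m" using cx below_new cP by auto
  have bm: "le b m" and am: "le a m" and ac: "le a c" using order_trans ab bc cm by blast+
  have "(id\<^sub>2 u \<star> F2 a c m) \<cdot> (id\<^sub>2 (u \<odot> F1 c m) \<star> F2 a b c) =
        (id\<^sub>2 u \<star> F2 a b m) \<cdot> ((id\<^sub>2 u \<star> F2 b c m) \<star> id\<^sub>2 (F1 a b))"
    by (rule pasting_new_last[OF old_hom[OF aP bP ab] old_hom[OF bP cP bc] old_hom[OF aP cP ac]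
          old_hom[OF cP lower_in cm] old_hom[OF bP lower_in bm] old_hom[OF aP lower_in am] u_hom
          old_comp[OF aP bP cP ab bc] old_comp[OF aP cP lower_in ac cm]
          old_comp[OF aP bP lower_in ab bm] old_comp[OF bP cP lower_in bc cm]
          old_cocycle[OF aP bP cP lower_in ab bc cm, unfolded cocycle_def]])
  then show ?thesis unfolding cocycle_def
    using old_ne_new[OF aP] old_ne_new[OF bP] old_ne_new[OF cP]
    by (simp add: ext_cell_to_new ext_arr_to_new ext_cell_old ext_arr_old)
qed

lemma ext_cocycle_new_third:
  assumes aP: "a \<in> P" and bP: "b \<in> P" and dP: "d \<in> P"
    and ab: "le a b" and bx: "le b x" and xd: "le x d"
  shows "cocycle a b x d ext_arr ext_cell"
proof -
  have Md: "le M d" using xd above_new dP by auto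
  have bm: "le b m" using bx below_new bP by auto
  have am: "le a m" and aM: "le a M" and bM: "le b M" and bd: "le b d" and ad: "le a d"
    using order_trans ab bm lower_upper Md by blast+
  have "through_new a d \<cdot> (id\<^sub>2 (F1 M d \<odot> v) \<star> (id\<^sub>2 u \<star> F2 a b m)) =
        F2 a b d \<cdot> (through_new b d \<star> id\<^sub>2 (F1 a b))"
    unfolding through_new_def
    by (rule pasting_new_third[OF old_hom[OF aP bP ab] old_hom[OF bP lower_in bm]
          old_hom[OF aP lower_in am] old_hom[OF lower_in upper_in lower_upper] u_hom v_hom
          old_hom[OF upper_in dP Md] old_hom[OF aP upper_in aM] old_hom[OF bP upper_in bM]
          old_hom[OF aP dP ad] old_hom[OF bP dP bd] glue
          old_comp[OF aP bP lower_in ab bm] old_comp[OF aP lower_in upper_in am lower_upper]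
          old_comp[OF bP lower_in upper_in bm lower_upper] old_comp[OF aP bP upper_in ab bM]
          old_comp[OF aP upper_in dP aM Md] old_comp[OF bP upper_in dP bM Md]
          old_comp[OF aP bP dP ab bd]
          old_cocycle[OF aP bP lower_in upper_in ab bm lower_upper, unfolded cocycle_def]
          old_cocycle[OF aP bP upper_in dP ab bM Md, unfolded cocycle_def]])
  then show ?thesis unfolding cocycle_def
    using old_ne_new[OF aP] old_ne_new[OF bP] old_ne_new[OF dP]
    by (simp add: ext_cell_through ext_cell_to_new ext_arr_from_new ext_cell_old ext_arr_old)
qed

lemma ext_cocycle_new_second:
  assumes aP: "a \<in> P" and cP: "c \<in> P" and dP: "d \<in> P"
    and ax: "le a x" and xc: "le x c" and cd: "le c d"
  shows "cocycle a x c d ext_arr ext_cell"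
proof -
  have Mc: "le M c" using xc above_new cP by auto
  have am: "le a m" using ax below_new aP by auto
  have aM: "le a M" and Md: "le M d" and ac: "le a c" and ad: "le a d"
    using order_trans am lower_upper Mc cd by blast+
  have "F2 a c d \<cdot> (id\<^sub>2 (F1 c d) \<star> through_new a c) =
        through_new a d \<cdot> ((F2 M c d \<star> id\<^sub>2 v) \<star> id\<^sub>2 (u \<odot> F1 a m))"
    unfolding through_new_def
    by (rule pasting_new_second[OF old_hom[OF aP lower_in am]
          old_hom[OF lower_in upper_in lower_upper] u_hom v_hom old_hom[OF upper_in cP Mc]
          old_hom[OF upper_in dP Md] old_hom[OF cP dP cd]
          old_hom[OF aP upper_in aM] old_hom[OF aP cP ac] old_hom[OF aP dP ad] glue
          old_comp[OF aP lower_in upper_in am lower_upper] old_comp[OF aP upper_in cP aM Mc]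
          old_comp[OF aP upper_in dP aM Md] old_comp[OF upper_in cP dP Mc cd]
          old_comp[OF aP cP dP ac cd]
          old_cocycle[OF aP upper_in cP dP aM Mc cd, unfolded cocycle_def]])
  then show ?thesis unfolding cocycle_def
    using old_ne_new[OF aP] old_ne_new[OF cP] old_ne_new[OF dP]
    by (simp add: ext_cell_through ext_cell_from_new ext_arr_to_new ext_cell_old ext_arr_old)
qed

lemma ext_cocycle_new_first:
  assumes bP: "b \<in> P" and cP: "c \<in> P" and dP: "d \<in> P"
    and xb: "le x b" and bc: "le b c" and cd: "le c d"
  shows "cocycle x b c d ext_arr ext_cell"
proof -
  have Mb: "le M b" using xb above_new bP by auto
  have Mc: "le M c" and Md: "le M d" and bd: "le b d" using order_trans Mb bc cd by blast+
  have "(F2 M c d \<star> id\<^sub>2 v) \<cdot> (id\<^sub>2 (F1 c d) \<star> (F2 M b c \<star> id\<^sub>2 v)) =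
        (F2 M b d \<star> id\<^sub>2 v) \<cdot> (F2 b c d \<star> id\<^sub>2 (F1 M b \<odot> v))"
    by (rule pasting_new_first[OF old_hom[OF upper_in bP Mb] old_hom[OF bP cP bc]
          old_hom[OF cP dP cd] old_hom[OF bP dP bd] old_hom[OF upper_in cP Mc]
          old_hom[OF upper_in dP Md] v_hom
          old_comp[OF bP cP dP bc cd] old_comp[OF upper_in bP cP Mb bc]
          old_comp[OF upper_in cP dP Mc cd] old_comp[OF upper_in bP dP Mb bd]
          old_cocycle[OF upper_in bP cP dP Mb bc cd, unfolded cocycle_def]])
  then show ?thesis unfolding cocycle_def
    using old_ne_new[OF bP] old_ne_new[OF cP] old_ne_new[OF dP]
    by (simp add: ext_cell_from_new ext_arr_from_new ext_cell_old ext_arr_old)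
qed

lemma ext_cocycle:
  assumes a: "a \<in> insert x P" and b: "b \<in> insert x P" and c: "c \<in> insert x P"
    and d: "d \<in> insert x P" and ab: "le a b" and bc: "le b c" and cd: "le c d"
  shows "cocycle a b c d ext_arr ext_cell"
proof -
  have ac: "le a c" and bd: "le b d" and ad: "le a d" using order_trans ab bc cd by blast+
  show ?thesis
  proof (cases "a = b \<or> b = c \<or> c = d")
    case True
    show ?thesis
      by (rule cocycle_degenerate[OF ext_hom[OF a b ab] ext_hom[OF b c bc] ext_hom[OF c d cd]
            ext_hom[OF a c ac] ext_hom[OF b d bd] ext_hom[OF a d ad]
            ext_compositor[OF a b c ab bc] ext_compositor[OF a b d ab bd]
            ext_compositor[OF a c d ac cd] ext_compositor[OF b c d bc cd]
            ext_unit[OF a] ext_unit[OF c]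
            ext_normalised[OF a c ac, THEN conjunct1] ext_normalised[OF a d ad, THEN conjunct1]
            ext_normalised[OF a b ab, THEN conjunct2] ext_normalised[OF b d bd, THEN conjunct1]
            ext_normalised[OF a c ac, THEN conjunct2] ext_normalised[OF b c bc, THEN conjunct2]
            True])
  next
    case False
    then have distinct: "a \<noteq> b" "b \<noteq> c" "c \<noteq> d" "a \<noteq> c" "b \<noteq> d" "a \<noteq> d"
      using order_antisym order_trans ab bc cd by blast+
    consider "d = x" | "c = x" | "b = x" | "a = x" | "x \<notin> {a, b, c, d}" by blast
    then show ?thesis
    proof cases
      case 1
      then show ?thesis using a b c distinct ext_cocycle_new_last ab bc cd by auto
    next
      case 2
      then show ?thesis using a b d distinct ext_cocycle_new_third ab bc cd by auto
    next
      case 3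
      then show ?thesis using a c d distinct ext_cocycle_new_second ab bc cd by auto
    next
      case 4
      then show ?thesis using b c d distinct ext_cocycle_new_first ab bc cd by auto
    next
      case 5
      then have "a \<in> P" "b \<in> P" "c \<in> P" "d \<in> P" using a b c d by auto
      with 5 show ?thesis using old_cocycle[OF _ _ _ _ ab bc cd]
        by (auto simp: cocycle_def ext_cell_old ext_arr_old)
    qed
  qed
qed

lemma ext_obj_in: "a \<in> insert x P \<Longrightarrow> ext_obj a \<in> obj C"
  using new_obj old_obj ext_obj_new ext_obj_old by auto

theorem extension: "su_pseudofunctor C (insert x P) le ext_obj ext_arr ext_cell"
  unfolding su_pseudofunctor_iff
  by (intro conjI ballI impI; (elim conjE)?)
    (simp_all add: ext_obj_in ext_hom ext_unit ext_compositor ext_normalised ext_cocycle)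

text \<open>New 1-cells are composites of old ones with \<open>u\<close> or \<open>v\<close>; hence they stay in any
  arrowy 2-subcategory containing the relevant pieces.\<close>

lemma ext_arr_new_new_in: "arrowy_sub C S \<Longrightarrow> ext_arr x x \<in> S"
  using new_obj unfolding arrowy_sub_def ext_arr_new_new by blast

lemma ext_arr_to_new_in:
  assumes "arrowy_sub C S" "u \<in> S" "a \<in> P" "le a m" "F1 a m \<in> S"
  shows "ext_arr a x \<in> S"
  using assms old_hom[of a m] lower_in u_hom old_ne_new[of a]
  unfolding arrowy_sub_def hom_def by (auto simp: ext_arr_to_new)

lemma ext_arr_from_new_in:
  assumes "arrowy_sub C S" "v \<in> S" "b \<in> P" "le M b" "F1 M b \<in> S"
  shows "ext_arr x b \<in> S"
  using assms old_hom[of M b] upper_in v_hom old_ne_new[of b]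
  unfolding arrowy_sub_def hom_def by (auto simp: ext_arr_from_new)

end

section \<open>Building a compactification point by point\<close>

lemma Delta_le_simp[simp]: "Delta_le (a, b) (c, d) \<longleftrightarrow> a \<le> c \<and> b \<le> d"
  unfolding Delta_le_def by simp

lemma Delta_le_trans: "Delta_le p q \<Longrightarrow> Delta_le q r \<Longrightarrow> Delta_le p r"
  by (cases p; cases q; cases r) auto

lemma Delta_le_antisym: "Delta_le p q \<Longrightarrow> Delta_le q p \<Longrightarrow> p = q"
  by (cases p; cases q) auto

locale factorization_system = two_one_cat C
  for C :: "('o, 'm, 'c) twocat" +
  fixes A B :: "'m set"
  assumes A_arrowy: "arrowy_sub C A" and B_arrowy: "arrowy_sub C B"
    and factorization: "\<forall>f\<in>arr C. \<exists>i\<in>A. \<exists>p\<in>B. \<exists>\<alpha>\<in>cel C.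
           src C i = src C f \<and> trg C i = src C p \<and> trg C p = trg C f \<and>
           src2 C \<alpha> = p \<odot> i \<and> trg2 C \<alpha> = f"
begin

lemma factor:
  assumes "hom f Y Z"
  obtains i p \<alpha> where "i \<in> A" "p \<in> B" "hom i Y (trg C i)" "hom p (trg C i) Z"
    "cell2 \<alpha> (p \<odot> i) f"
proof -
  obtain i p \<alpha> where "i \<in> A" "p \<in> B" "\<alpha> \<in> cel C" "src C i = src C f" "trg C i = src C p"
    "trg C p = trg C f" "src2 C \<alpha> = p \<odot> i" "trg2 C \<alpha> = f"
    using factorization assms unfolding hom_def by blast
  moreover have "i \<in> arr C" "p \<in> arr C"
    using \<open>i \<in> A\<close> \<open>p \<in> B\<close> A_arrowy B_arrowy unfolding arrowy_sub_def by auto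
  ultimately show thesis using that assms unfolding hom_def cell2_def by auto
qed

definition partial_compactification ::
  "nat \<Rightarrow> (nat \<Rightarrow> 'o) \<Rightarrow> (nat \<Rightarrow> nat \<Rightarrow> 'm) \<Rightarrow> (nat \<Rightarrow> nat \<Rightarrow> nat \<Rightarrow> 'c) \<Rightarrow> (nat \<times> nat) set \<Rightarrow>
   (nat \<times> nat \<Rightarrow> 'o) \<Rightarrow> (nat \<times> nat \<Rightarrow> nat \<times> nat \<Rightarrow> 'm) \<Rightarrow>
   (nat \<times> nat \<Rightarrow> nat \<times> nat \<Rightarrow> nat \<times> nat \<Rightarrow> 'c) \<Rightarrow> bool" where
  "partial_compactification n s0 s1 s2 P F0 F1 F2 \<longleftrightarrow>
     su_pseudofunctor C P Delta_le F0 F1 F2 \<and>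
     (\<forall>l\<le>n. F0 (l, l) = s0 l) \<and>
     (\<forall>l l'. l \<le> l' \<and> l' \<le> n \<longrightarrow> F1 (l, l) (l', l') = s1 l l') \<and>
     (\<forall>l l' l''. l \<le> l' \<and> l' \<le> l'' \<and> l'' \<le> n \<longrightarrow> F2 (l, l) (l', l') (l'', l'') = s2 l l' l'') \<and>
     (\<forall>k k' l. (k, l) \<in> P \<and> (k', l) \<in> P \<and> k \<le> k' \<longrightarrow> F1 (k, l) (k', l) \<in> A) \<and>
     (\<forall>k l l'. (k, l) \<in> P \<and> (k, l') \<in> P \<and> l \<le> l' \<longrightarrow> F1 (k, l) (k, l') \<in> B)"

lemma horizontal_after_insertion:
  assumes ins: "point_insertion C P Delta_le F0 F1 F2 (Suc k, l) (k, l) (Suc k, Suc l) u v \<beta> X"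
    and u: "u \<in> A"
    and in_A: "\<And>a a' b. (a, b) \<in> P \<Longrightarrow> (a', b) \<in> P \<Longrightarrow> a \<le> a' \<Longrightarrow> F1 (a, b) (a', b) \<in> A"
    and y: "(a, b) \<in> insert (Suc k, l) P" and z: "(a', b) \<in> insert (Suc k, l) P" and aa: "a \<le> a'"
  shows "point_insertion.ext_arr C F1 (Suc k, l) (k, l) (Suc k, Suc l) u v X (a, b) (a', b) \<in> A"
proof -
  interpret point_insertion C P Delta_le F0 F1 F2 "(Suc k, l)" "(k, l)" "(Suc k, Suc l)" u v \<beta> X
    by (rule ins)
  consider "(a, b) = (Suc k, l)" "(a', b) = (Suc k, l)" | "(a, b) \<in> P" "(a', b) = (Suc k, l)"
    | "(a, b) = (Suc k, l)" "(a', b) \<in> P" | "(a, b) \<in> P" "(a', b) \<in> P"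
    using y z by auto
  then show ?thesis
  proof cases
    case 1
    then show ?thesis using ext_arr_new_new_in[OF A_arrowy] by simp
  next
    case 2
    then have "Delta_le (a, b) (k, l)" using below_new[OF 2(1)] aa by auto
    then show ?thesis using 2 in_A lower_in ext_arr_to_new_in[OF A_arrowy u] by auto
  next
    case 3
    then show ?thesis using above_new[OF 3(2)] aa by auto
  next
    case 4
    then show ?thesis
      using in_A[OF 4 aa] ext_arr_old[OF old_ne_new[OF 4(1)] old_ne_new[OF 4(2)]] by simp
  qed
qed

lemma vertical_after_insertion:
  assumes ins: "point_insertion C P Delta_le F0 F1 F2 (Suc k, l) (k, l) (Suc k, Suc l) u v \<beta> X"
    and v: "v \<in> B"
    and in_B: "\<And>a b b'. (a, b) \<in> P \<Longrightarrow> (a, b') \<in> P \<Longrightarrow> b \<le> b' \<Longrightarrow> F1 (a, b) (a, b') \<in> B"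
    and y: "(a, b) \<in> insert (Suc k, l) P" and z: "(a, b') \<in> insert (Suc k, l) P" and bb: "b \<le> b'"
  shows "point_insertion.ext_arr C F1 (Suc k, l) (k, l) (Suc k, Suc l) u v X (a, b) (a, b') \<in> B"
proof -
  interpret point_insertion C P Delta_le F0 F1 F2 "(Suc k, l)" "(k, l)" "(Suc k, Suc l)" u v \<beta> X
    by (rule ins)
  consider "(a, b) = (Suc k, l)" "(a, b') = (Suc k, l)" | "(a, b) \<in> P" "(a, b') = (Suc k, l)"
    | "(a, b) = (Suc k, l)" "(a, b') \<in> P" | "(a, b) \<in> P" "(a, b') \<in> P"
    using y z by auto
  then show ?thesis
  proof cases
    case 1
    then show ?thesis using ext_arr_new_new_in[OF B_arrowy] by simp
  next
    case 2
    then show ?thesis using below_new[OF 2(1)] bb by auto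
  next
    case 3
    then have "Delta_le (Suc k, Suc l) (a, b')" using above_new[OF 3(2)] bb by auto
    then show ?thesis using 3 in_B upper_in ext_arr_from_new_in[OF B_arrowy v] by auto
  next
    case 4
    then show ?thesis
      using in_B[OF 4 bb] ext_arr_old[OF old_ne_new[OF 4(1)] old_ne_new[OF 4(2)]] by simp
  qed
qed

lemma insertion_step:
  assumes pc: "partial_compactification n s0 s1 s2 P F0 F1 F2"
    and new: "(Suc k, l) \<notin> P" and lk: "l \<le> k"
    and left: "(k, l) \<in> P" and up: "(Suc k, Suc l) \<in> P"
    and below: "\<And>y. y \<in> P \<Longrightarrow> Delta_le y (Suc k, l) \<longleftrightarrow> Delta_le y (k, l)"
    and above: "\<And>z. z \<in> P \<Longrightarrow> Delta_le (Suc k, l) z \<longleftrightarrow> Delta_le (Suc k, Suc l) z"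
  shows "\<exists>G0 G1 G2. partial_compactification n s0 s1 s2 (insert (Suc k, l) P) G0 G1 G2"
proof -
  have pf: "su_pseudofunctor C P Delta_le F0 F1 F2"
    and in_A: "\<And>a a' b. (a, b) \<in> P \<Longrightarrow> (a', b) \<in> P \<Longrightarrow> a \<le> a' \<Longrightarrow> F1 (a, b) (a', b) \<in> A"
    and in_B: "\<And>a b b'. (a, b) \<in> P \<Longrightarrow> (a, b') \<in> P \<Longrightarrow> b \<le> b' \<Longrightarrow> F1 (a, b) (a, b') \<in> B"
    using pc unfolding partial_compactification_def by blast+
  have "hom (F1 (k, l) (Suc k, Suc l)) (F0 (k, l)) (F0 (Suc k, Suc l))"
    using pf left up unfolding su_pseudofunctor_iff by simp
  then obtain i p \<alpha> where i: "i \<in> A" "hom i (F0 (k, l)) (trg C i)"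
    and p: "p \<in> B" "hom p (trg C i) (F0 (Suc k, Suc l))"
    and \<alpha>: "cell2 \<alpha> (p \<odot> i) (F1 (k, l) (Suc k, Suc l))"
    by (rule factor)
  have ins: "point_insertion C P Delta_le F0 F1 F2 (Suc k, l) (k, l) (Suc k, Suc l) i p \<alpha> (trg C i)"
    using pf Delta_le_trans Delta_le_antisym new left up below above i p \<alpha>
    by unfold_locales auto
  interpret point_insertion C P Delta_le F0 F1 F2
      "(Suc k, l)" "(k, l)" "(Suc k, Suc l)" i p \<alpha> "trg C i"
    by (rule ins)
  note horizontal = horizontal_after_insertion[OF ins \<open>i \<in> A\<close> in_A]
  note vertical = vertical_after_insertion[OF ins \<open>p \<in> B\<close> in_B]
  have diagonal: "(j, j) \<noteq> (Suc k, l)" for j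
    using lk by auto
  have "partial_compactification n s0 s1 s2 (insert (Suc k, l) P) ext_obj ext_arr ext_cell"
    unfolding partial_compactification_def
  proof (intro conjI)
    show "\<forall>j\<le>n. ext_obj (j, j) = s0 j"
      using pc diagonal unfolding partial_compactification_def ext_obj_def by simp
    show "\<forall>j j'. j \<le> j' \<and> j' \<le> n \<longrightarrow> ext_arr (j, j) (j', j') = s1 j j'"
      using pc unfolding partial_compactification_def
      by (simp add: ext_arr_old[OF diagonal diagonal])
    show "\<forall>j j' j''. j \<le> j' \<and> j' \<le> j'' \<and> j'' \<le> n \<longrightarrow>
        ext_cell (j, j) (j', j') (j'', j'') = s2 j j' j''"
      using pc unfolding partial_compactification_def
      by (simp add: ext_cell_old[OF diagonal diagonal diagonal])
  qed (use extension horizontal vertical in blast)+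
  then show ?thesis by blast
qed

definition staircase :: "nat \<Rightarrow> nat \<Rightarrow> nat \<Rightarrow> (nat \<times> nat) set" where
  "staircase n k j =
     {(a, a) | a. a \<le> n} \<union> {(a, b) | a b. b < a \<and> a < k} \<union> {(k, b) | b. j \<le> b \<and> b < k}"

lemma diagonal_start:
  assumes "simplex C n s0 s1 s2"
  shows "partial_compactification n s0 s1 s2 (staircase n 0 0)
           (\<lambda>p. s0 (snd p)) (\<lambda>p q. s1 (snd p) (snd q)) (\<lambda>p q r. s2 (snd p) (snd q) (snd r))"
proof -
  have diag: "staircase n 0 0 = {(a, a) | a. a \<le> n}" unfolding staircase_def by auto
  have pf: "su_pseudofunctor C {0..n} (\<le>) s0 s1 s2" using assms unfolding simplex_def .
  then have "\<And>l. l \<le> n \<Longrightarrow> s1 l l \<in> A \<inter> B"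
    using A_arrowy B_arrowy unfolding su_pseudofunctor_def arrowy_sub_def by auto
  with pf show ?thesis
    unfolding partial_compactification_def diag su_pseudofunctor_def by auto
qed

lemma fill_row:
  assumes row_start:
      "\<exists>F0 F1 F2. partial_compactification n s0 s1 s2 (staircase n (Suc k) (Suc k)) F0 F1 F2"
    and kn: "Suc k \<le> n" and j: "j \<le> Suc k"
  shows "\<exists>F0 F1 F2. partial_compactification n s0 s1 s2 (staircase n (Suc k) j) F0 F1 F2"
  using j
proof (induction j rule: inc_induct)
  case base
  show ?case using row_start .
next
  case (step j)
  then obtain F0 F1 F2
    where pc: "partial_compactification n s0 s1 s2 (staircase n (Suc k) (Suc j)) F0 F1 F2" by blast
  have "staircase n (Suc k) j = insert (Suc k, j) (staircase n (Suc k) (Suc j))"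
    using step.hyps kn unfolding staircase_def by auto
  moreover have "\<exists>G0 G1 G2. partial_compactification n s0 s1 s2
      (insert (Suc k, j) (staircase n (Suc k) (Suc j))) G0 G1 G2"
  proof (rule insertion_step[OF pc])
    show "(Suc k, j) \<notin> staircase n (Suc k) (Suc j)" "j \<le> k"
      using step.hyps unfolding staircase_def by auto
    show "(k, j) \<in> staircase n (Suc k) (Suc j)" "(Suc k, Suc j) \<in> staircase n (Suc k) (Suc j)"
      using step.hyps kn unfolding staircase_def by (cases "j = k"; auto)+
    show "\<And>y. y \<in> staircase n (Suc k) (Suc j) \<Longrightarrow> Delta_le y (Suc k, j) \<longleftrightarrow> Delta_le y (k, j)"
      "\<And>z. z \<in> staircase n (Suc k) (Suc j) \<Longrightarrow> Delta_le (Suc k, j) z \<longleftrightarrow> Delta_le (Suc k, Suc j) z"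
      using step.hyps unfolding staircase_def by auto
  qed
  ultimately show ?case by simp
qed

lemma fill_rows:
  assumes "simplex C n s0 s1 s2" and "k \<le> n"
  shows "\<exists>F0 F1 F2. partial_compactification n s0 s1 s2 (staircase n k 0) F0 F1 F2"
  using assms(2)
proof (induction k)
  case 0
  show ?case using diagonal_start[OF assms(1)] by blast
next
  case (Suc k)
  have "staircase n (Suc k) (Suc k) = staircase n k 0"
    unfolding staircase_def by auto
  then show ?case using fill_row[of n s0 s1 s2 k 0] Suc by simp
qed

end

theorem mainTheorem6:
  fixes C :: "('o, 'm, 'c) twocat" and A B :: "'m set"
  assumes "two_one_category C"
    and "arrowy_sub C A" and "arrowy_sub C B"
    and "\<forall>f\<in>arr C. \<exists>i\<in>A. \<exists>p\<in>B. \<exists>\<alpha>\<in>cel C.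
           src C i = src C f \<and> trg C i = src C p \<and> trg C p = trg C f \<and>
           src2 C \<alpha> = cmp C p i \<and> trg2 C \<alpha> = f"
  shows "\<forall>n s0 s1 s2. simplex C n s0 s1 s2 \<longrightarrow> Comp C A B n s0 s1 s2 \<noteq> {}"
proof (intro allI impI)
  fix n s0 s1 s2
  assume simplex: "simplex C n s0 s1 s2"
  interpret factorization_system C A B
    using assms by unfold_locales
  obtain F0 F1 F2 where pc: "partial_compactification n s0 s1 s2 (staircase n n 0) F0 F1 F2"
    using fill_rows[OF simplex] by blast
  have "staircase n n 0 = Delta n"
    unfolding staircase_def Delta_def by auto
  then have "(F0, F1, F2) \<in> Comp C A B n s0 s1 s2"
    using pc unfolding partial_compactification_def Comp_def Delta_def by auto
  then show "Comp C A B n s0 s1 s2 \<noteq> {}" by blast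
qed

end
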